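(* Let $s\ge 3$ and let $\lambda$ be an $(s,s+1,s+2)$-core partition of maximum size. Then there exist integers $1\le i\le s-1$ and $0\le j\le\lfloor (s-i+1)/2\rfloor$ such that $\lambda=\lambda_{i,j}$.
   Context: An $(s,s+1,s+2)$-core is a partition with no hook length divisible by $s$, $s+1$ or $s+2$. The $\beta$-set of a partition is the set of hook lengths in its first column; a partition is uniquely determined by its $\beta$-set, and for a finite set $\{h_1>h_2>\cdots>h_m\}$ of positive integers the unique partition with this $\beta$-set is $(h_1-(m-1),h_2-(m-2),\ldots,h_{m-1}-1,h_m)$. For $s\ge 3$, $1\le i\le s-1$, define $\beta_{i,0}=\bigcup_{k\ge 0}\{i+1+k(s+2),\ldots,(k+1)s-1\}$ (empty intervals omitted), and for $1\le j\le\lfloor(s-i+1)/2\rfloor$ define $\beta_{i,j}=\beta_{i,0}\cup\{i+p(s+2): 0\le p\le j-1\}$. Let $\lambda_{i,j}$ be the unique partition with $\beta(\lambda_{i,j})=\beta_{i,j}$ (each $\lambda_{i,j}$ is an $(s,s+1,s+2)$-core). *)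

theory Defs
  imports Main
begin

definition is_partition :: "nat list \<Rightarrow> bool" where
  "is_partition la \<longleftrightarrow> sorted_wrt (\<ge>) la \<and> 0 \<notin> set la"

definition psize :: "nat list \<Rightarrow> nat" where
  "psize la = sum_list la"

text \<open>Hook length of cell (r,c) (0-indexed): arm + leg + 1.\<close>
definition hook :: "nat list \<Rightarrow> nat \<Rightarrow> nat \<Rightarrow> nat" where
  "hook la r c = (la ! r - c) + card {k. r < k \<and> k < length la \<and> c < la ! k}"

definition hooks :: "nat list \<Rightarrow> nat set" where
  "hooks la = {hook la r c | r c. r < length la \<and> c < la ! r}"

definition is_core3 :: "nat \<Rightarrow> nat list \<Rightarrow> bool" where
  "is_core3 s la \<longleftrightarrow> (\<forall>h \<in> hooks la. \<not> s dvd h \<and> \<not> (s+1) dvd h \<and> \<not> (s+2) dvd h)"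

definition beta :: "nat list \<Rightarrow> nat set" where
  "beta la = {hook la r 0 | r. r < length la}"

text \<open>The partition with beta-set {h1 > ... > hm}: (h1-(m-1), ..., h_{m-1}-1, hm).\<close>
definition partition_of_beta :: "nat set \<Rightarrow> nat list" where
  "partition_of_beta B = (let hs = rev (sorted_list_of_set B); m = length hs
     in map (\<lambda>k. hs ! k - (m - 1 - k)) [0..<m])"

definition beta0 :: "nat \<Rightarrow> nat \<Rightarrow> nat set" where
  "beta0 s i = {x. \<exists>k. i + 1 + k * (s + 2) \<le> x \<and> x + 1 \<le> (k + 1) * s}"

definition betaij :: "nat \<Rightarrow> nat \<Rightarrow> nat \<Rightarrow> nat set" where
  "betaij s i j = beta0 s i \<union> {i + p * (s + 2) | p. p < j}"

definition lambdaij :: "nat \<Rightarrow> nat \<Rightarrow> nat \<Rightarrow> nat list" where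
  "lambdaij s i j = partition_of_beta (betaij s i j)"

end

theory Submission
  imports Defs
begin

(* The argument works entirely with beta-sets (first-column hook lengths).
   1. For a partition with m parts the first-column hooks are b_r = la_r + (m-1-r); they are
      strictly decreasing, and the set of all hooks is {b - y | b in beta, y < b, y not in beta}.
      Hence la is an (s,s+1,s+2)-core iff its beta-set is "closed": stable under subtracting
      s, s+1 and s+2 whenever the result is nonnegative.  The map partition_of_beta inverts
      beta, and the size of the partition with beta-set B is  sum B - (0 + 1 + ... + (|B|-1)).
   2. Every element of a closed set B lies in exactly one level (k s + 2k, k s + s), and the
      level counts n_k satisfy n_0 < s and n_(k+1) + 2 <= n_k whenever n_(k+1) > 0.
   3. Conversely, for any such admissible count sequence the set of the top n_k elements of
      every level is closed.  It has the cardinality of B and the largest possible sum, with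
      equality only for B itself; so a closed set of maximal partition size is of this form.
   4. If n_l >= n_(l+1) + 3, both raising n_(l+1) and lowering n_l by one keep the counts
      admissible; comparing sizes shows that one of the two new closed sets is strictly larger.
      So maximality forces n_k = c - 2k, and this top set is exactly beta_(s-c, ceil(c/2)). *)


section \<open>Partitions, first-column hooks and hook sets\<close>

lemma strict_decrease_gap:
  fixes g :: "nat \<Rightarrow> nat"
  assumes "\<And>i j. i < j \<Longrightarrow> j < m \<Longrightarrow> g j < g i" "i \<le> j" "j < m"
  shows "g j + (j - i) \<le> g i"
  using assms(2,3)
proof (induction j)
  case 0 then show ?case by simp
next
  case (Suc j)
  show ?case
  proof (cases "i = Suc j")
    case True then show ?thesis by simp
  next
    case False
    then have "i \<le> j" using Suc by simp
    with Suc have "g j + (j - i) \<le> g i" by simp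
    moreover have "g (Suc j) < g j" using assms(1) Suc by simp
    ultimately show ?thesis using \<open>i \<le> j\<close> by simp
  qed
qed

lemma partition_antimono: "is_partition la \<Longrightarrow> i \<le> j \<Longrightarrow> j < length la \<Longrightarrow> la!j \<le> la!i"
  unfolding is_partition_def
  by (metis le_eq_less_or_eq order_le_less_trans sorted_wrt_iff_nth_less)

lemma partition_pos: "is_partition la \<Longrightarrow> k < length la \<Longrightarrow> 0 < la!k"
  unfolding is_partition_def by (metis gr0I nth_mem)

definition first_hook :: "nat list \<Rightarrow> nat \<Rightarrow> nat" where
  "first_hook la r = la!r + (length la - 1 - r)"

lemma first_hook_strict:
  "is_partition la \<Longrightarrow> i < j \<Longrightarrow> j < length la \<Longrightarrow> first_hook la j < first_hook la i"
  unfolding first_hook_def using partition_antimono[of la i j] by simp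

lemma first_hook_gap:
  "is_partition la \<Longrightarrow> i \<le> j \<Longrightarrow> j < length la \<Longrightarrow> first_hook la j + (j - i) \<le> first_hook la i"
  by (rule strict_decrease_gap[where m="length la"]) (auto intro: first_hook_strict)

lemma hook_first_column: "is_partition la \<Longrightarrow> r < length la \<Longrightarrow> hook la r 0 = first_hook la r"
proof -
  assume a: "is_partition la" "r < length la"
  have "{k. r < k \<and> k < length la \<and> 0 < la!k} = {r<..<length la}"
    using partition_pos[OF a(1)] by auto
  then show ?thesis unfolding hook_def first_hook_def by simp
qed

lemma beta_first_hooks: assumes "is_partition la" shows "beta la = first_hook la ` {..<length la}"
  unfolding beta_def using hook_first_column[OF assms] by (auto simp: image_iff) (metis)

lemma initial_segment:
  fixes r m :: nat
  assumes "r < m" "P r" "\<And>k k'. k \<le> k' \<Longrightarrow> k' < m \<Longrightarrow> P k' \<Longrightarrow> P k"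
  shows "\<exists>e. r \<le> e \<and> e < m \<and> (\<forall>k<m. P k \<longleftrightarrow> k \<le> e)"
proof -
  let ?S = "{k. k < m \<and> P k}"
  have fin: "finite ?S" by (rule finite_subset[of _ "{..<m}"]) auto
  have ne: "r \<in> ?S" using assms by simp
  define e where "e = Max ?S"
  have "e \<in> ?S" unfolding e_def using fin ne by (intro Max_in) auto
  moreover have "r \<le> e" unfolding e_def using fin ne by simp
  moreover have "\<forall>k<m. P k \<longleftrightarrow> k \<le> e"
  proof (intro allI impI iffI)
    fix k assume "k < m" "P k" then show "k \<le> e" unfolding e_def using fin by simp
  next
    fix k assume "k < m" "k \<le> e" then show "P k" using assms(3) \<open>e \<in> ?S\<close> by blast
  qed
  ultimately show ?thesis by blast
qed

lemma hook_leg: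
  assumes "r \<le> e" and "\<And>k. k < length la \<Longrightarrow> c < la!k \<longleftrightarrow> k \<le> e" and "e < length la"
  shows "hook la r c = la!r - c + (e - r)"
proof -
  have "{k. r < k \<and> k < length la \<and> c < la!k} = {r<..e}" using assms by auto
  then show ?thesis unfolding hook_def by simp
qed

text \<open>Every hook is a gap of the beta-set: hook (r,c) = b_r - y for some y < b_r outside the
  beta-set (y is c plus the number of rows below the leg of the hook).\<close>
lemma hook_as_beta_gap:
  assumes p: "is_partition la" and r: "r < length la" and c: "c < la!r"
  shows "\<exists>y. y < first_hook la r \<and> y \<notin> first_hook la ` {..<length la} \<and> hook la r c = first_hook la r - y"
proof -
  define m where "m = length la"
  have down_closed: "\<And>k k'. k \<le> k' \<Longrightarrow> k' < m \<Longrightarrow> c < la!k' \<Longrightarrow> c < la!k"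
    using partition_antimono[OF p] unfolding m_def by (meson order_less_le_trans)
  have "\<exists>e. r \<le> e \<and> e < m \<and> (\<forall>k<m. c < la!k \<longleftrightarrow> k \<le> e)"
    by (rule initial_segment) (use r c down_closed in \<open>auto simp: m_def\<close>)
  then obtain e where e: "r \<le> e" "e < m" "\<forall>k<m. c < la!k \<longleftrightarrow> k \<le> e" by blast
  have hk: "hook la r c = la!r - c + (e - r)" using hook_leg[of r e la c] e unfolding m_def by blast
  define y where "y = c + (m - 1 - e)"
  have "y \<notin> first_hook la ` {..<length la}"
  proof
    assume "y \<in> first_hook la ` {..<length la}"
    then obtain k where k: "k < m" "y = first_hook la k" unfolding m_def by auto
    have bk: "first_hook la k = la!k + (m - 1 - k)" unfolding first_hook_def m_def by simp
    show False
    proof (cases "k \<le> e")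
      case True
      then have "c < la!k" using e k by simp
      moreover have "m - 1 - e \<le> m - 1 - k" using True by simp
      ultimately show False using k bk unfolding y_def by linarith
    next
      case False
      then have "la!k \<le> c" using e k by (meson not_less)
      moreover have "m - 1 - k < m - 1 - e" using False k by simp
      ultimately show False using k bk unfolding y_def by linarith
    qed
  qed
  moreover have br: "first_hook la r = la!r + (m - 1 - r)" unfolding first_hook_def m_def by simp
  moreover have "m - 1 - r = (m - 1 - e) + (e - r)" using e by simp
  moreover have "y < first_hook la r" using c br \<open>m - 1 - r = (m - 1 - e) + (e - r)\<close> unfolding y_def by linarith
  moreover have "hook la r c = first_hook la r - y" using hk c br \<open>m - 1 - r = (m - 1 - e) + (e - r)\<close>
    unfolding y_def by simp
  ultimately show ?thesis by blast
qed

text \<open>If all first-column hooks below row e are smaller than y, then there are at most y such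
  rows, since these hooks are distinct positive numbers.\<close>
lemma rows_below_le:
  assumes p: "is_partition la" and e: "e < length la"
    and below: "\<And>k. e < k \<Longrightarrow> k < length la \<Longrightarrow> first_hook la k < y"
  shows "length la - 1 - e \<le> y"
proof (cases "Suc e < length la")
  case True
  let ?m = "length la"
  have "first_hook la (?m - 1) + (?m - 1 - Suc e) \<le> first_hook la (Suc e)"
    using first_hook_gap[OF p, of "Suc e" "?m - 1"] True by simp
  moreover have "first_hook la (Suc e) < y" using below True by simp
  moreover have "0 < la!(?m - 1)" using partition_pos[OF p, of "?m - 1"] True by simp
  ultimately show ?thesis unfolding first_hook_def using True by linarith
next
  case False then show ?thesis using e by simp
qed

text \<open>Conversely every such difference b_r - y is the hook length of a cell in row r: with e the
  last row whose beta-number exceeds y, take the column c = y - (m - 1 - e).\<close>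
lemma beta_gap_as_hook:
  assumes p: "is_partition la" and r: "r < length la" and y: "y < first_hook la r"
    and yn: "y \<notin> first_hook la ` {..<length la}"
  shows "\<exists>c<la!r. hook la r c = first_hook la r - y"
proof -
  define m where "m = length la"
  have first_hook_m: "\<And>k. first_hook la k = la!k + (m - 1 - k)" unfolding first_hook_def m_def by simp
  have down_closed: "\<And>k k'. k \<le> k' \<Longrightarrow> k' < m \<Longrightarrow> y < first_hook la k' \<Longrightarrow> y < first_hook la k"
    using first_hook_strict[OF p] unfolding m_def by (metis le_eq_less_or_eq order_less_trans)
  have "\<exists>e. r \<le> e \<and> e < m \<and> (\<forall>k<m. y < first_hook la k \<longleftrightarrow> k \<le> e)"
    by (rule initial_segment) (use r y down_closed in \<open>auto simp: m_def\<close>)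
  then obtain e where e: "r \<le> e" "e < m" "\<forall>k<m. y < first_hook la k \<longleftrightarrow> k \<le> e" by blast
  define q where "q = m - 1 - e"
  have ltafter: "first_hook la k < y" if "e < k" "k < m" for k
  proof -
    have "\<not> y < first_hook la k" using e that by auto
    moreover have "first_hook la k \<noteq> y" using yn that unfolding m_def by auto
    ultimately show ?thesis by simp
  qed
  have ge: "q \<le> y" unfolding q_def m_def by (rule rows_below_le[OF p]) (use e ltafter in \<open>auto simp: m_def\<close>)
  define c where "c = y - q"
  have above: "c < la!k" if "k \<le> e" for k
  proof -
    have "y < first_hook la e" using e by simp
    then have "c < la!e" unfolding c_def using ge first_hook_m[of e] unfolding q_def by linarith
    moreover have "la!e \<le> la!k" using partition_antimono[OF p that] e unfolding m_def by simp
    ultimately show ?thesis by simp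
  qed
  have below: "la!k \<le> c" if "e < k" "k < m" for k
  proof -
    have s1: "first_hook la k + (k - Suc e) \<le> first_hook la (Suc e)"
      using first_hook_gap[OF p, of "Suc e" k] that unfolding m_def by simp
    have "first_hook la (Suc e) < y" using ltafter that by simp
    moreover have "(m - 1 - k) + (k - Suc e) + 1 = q" using that unfolding q_def by simp
    ultimately show ?thesis using s1 first_hook_m[of k] ge unfolding c_def by linarith
  qed
  have "c < la!k \<longleftrightarrow> k \<le> e" if "k < length la" for k
    using above below that unfolding m_def by (meson not_le)
  then have hk: "hook la r c = la!r - c + (e - r)" using hook_leg[of r e la c] e unfolding m_def by blast
  have cr: "c < la!r" using above e by simp
  have "m - 1 - r = q + (e - r)" using e unfolding q_def by simp
  then have "hook la r c = first_hook la r - y" using hk ge cr first_hook_m[of r] unfolding c_def by (simp add: add.assoc)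
  with cr show ?thesis by blast
qed

lemma hooks_beta_gaps:
  assumes p: "is_partition la"
  shows "hooks la = {b - y | b y. b \<in> beta la \<and> y < b \<and> y \<notin> beta la}"
proof (rule set_eqI; rule iffI)
  fix h assume "h \<in> hooks la"
  then obtain r c where "r < length la" "c < la!r" "h = hook la r c" unfolding hooks_def by blast
  then show "h \<in> {b - y | b y. b \<in> beta la \<and> y < b \<and> y \<notin> beta la}"
    using hook_as_beta_gap[OF p] unfolding beta_first_hooks[OF p] by blast
next
  fix h assume "h \<in> {b - y | b y. b \<in> beta la \<and> y < b \<and> y \<notin> beta la}"
  then obtain r y where "r < length la" "y < first_hook la r" "y \<notin> first_hook la ` {..<length la}"
      "h = first_hook la r - y"
    unfolding beta_first_hooks[OF p] by blast
  moreover then obtain c where "c < la!r" "hook la r c = first_hook la r - y"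
    using beta_gap_as_hook[OF p] by blast
  ultimately show "h \<in> hooks la"
    unfolding hooks_def mem_Collect_eq by (intro exI[of _ r] exI[of _ c]) simp
qed
section \<open>From beta-sets back to partitions\<close>

definition beta_desc :: "nat set \<Rightarrow> nat list" where "beta_desc B = rev (sorted_list_of_set B)"

lemma beta_desc_length: "finite B \<Longrightarrow> length (beta_desc B) = card B"
  unfolding beta_desc_def by simp

lemma beta_desc_set: "finite B \<Longrightarrow> set (beta_desc B) = B"
  unfolding beta_desc_def by simp

lemma beta_desc_strict: assumes "finite B" "i < j" "j < card B" shows "beta_desc B ! j < beta_desc B ! i"
proof -
  let ?xs = "sorted_list_of_set B"
  have so: "sorted_wrt (<) ?xs" by simp
  have len: "length ?xs = card B" using assms by simp
  have "?xs ! (card B - Suc j) < ?xs ! (card B - Suc i)"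
    using so assms len by (simp add: sorted_wrt_iff_nth_less)
  then show ?thesis unfolding beta_desc_def using assms len by (simp add: rev_nth)
qed

lemma beta_desc_in: "finite B \<Longrightarrow> k < card B \<Longrightarrow> beta_desc B ! k \<in> B"
  using beta_desc_set beta_desc_length by (metis nth_mem)

lemma beta_desc_lower: assumes "finite B" "0 \<notin> B" "k < card B" shows "card B - k \<le> beta_desc B ! k"
proof -
  have "beta_desc B ! (card B - 1) + (card B - 1 - k) \<le> beta_desc B ! k"
    by (rule strict_decrease_gap[where m="card B"]) (use assms beta_desc_strict in auto)
  moreover have "beta_desc B ! (card B - 1) \<in> B" using assms beta_desc_in by simp
  then have "0 < beta_desc B ! (card B - 1)" using assms by (metis gr0I)
  ultimately show ?thesis using assms by linarith
qed

lemma partition_of_beta_eq: "finite B \<Longrightarrow> partition_of_beta B = map (\<lambda>k. beta_desc B ! k - (card B - 1 - k)) [0..<card B]"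
  unfolding partition_of_beta_def Let_def using beta_desc_length by (simp add: beta_desc_def)

lemma partition_of_beta_length: "finite B \<Longrightarrow> length (partition_of_beta B) = card B"
  using partition_of_beta_eq by simp

lemma partition_of_beta_nth: "finite B \<Longrightarrow> k < card B \<Longrightarrow> partition_of_beta B ! k = beta_desc B ! k - (card B - 1 - k)"
  using partition_of_beta_eq by simp

lemma partition_of_beta_is_partition: assumes "finite B" "0 \<notin> B" shows "is_partition (partition_of_beta B)"
  unfolding is_partition_def
proof
  show "sorted_wrt (\<ge>) (partition_of_beta B)"
  proof (subst sorted_wrt_iff_nth_less, intro allI impI)
    fix i j assume ij: "i < j" "j < length (partition_of_beta B)"
    then have j: "j < card B" using partition_of_beta_length assms by simp
    have "beta_desc B ! j + (j - i) \<le> beta_desc B ! i"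
      by (rule strict_decrease_gap[where m="card B"]) (use assms beta_desc_strict ij j in auto)
    moreover have "card B - j \<le> beta_desc B ! j" using beta_desc_lower assms j by simp
    ultimately show "partition_of_beta B ! j \<le> partition_of_beta B ! i"
      using partition_of_beta_nth assms j ij by simp
  qed
next
  show "0 \<notin> set (partition_of_beta B)"
  proof
    assume "0 \<in> set (partition_of_beta B)"
    then obtain k where k: "k < card B" "partition_of_beta B ! k = 0"
      using partition_of_beta_length assms by (metis in_set_conv_nth)
    have "card B - k \<le> beta_desc B ! k" using beta_desc_lower assms k by simp
    then show False using k partition_of_beta_nth assms by simp
  qed
qed

lemma first_hook_partition_of_beta: assumes "finite B" "0 \<notin> B" "k < card B"
  shows "first_hook (partition_of_beta B) k = beta_desc B ! k"
  using partition_of_beta_nth[OF assms(1,3)] beta_desc_lower[OF assms] partition_of_beta_length[OF assms(1)] assms(3)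
  unfolding first_hook_def by simp

lemma beta_partition_of_beta:
  assumes "finite B" "0 \<notin> B"
  shows "beta (partition_of_beta B) = B"
proof -
  let ?mu = "partition_of_beta B"
  have "beta ?mu = first_hook ?mu ` {..<length ?mu}"
    using beta_first_hooks[OF partition_of_beta_is_partition[OF assms]] .
  also have "\<dots> = (\<lambda>k. beta_desc B ! k) ` {..<card B}"
    using first_hook_partition_of_beta[OF assms] partition_of_beta_length[OF assms(1)] by auto
  also have "\<dots> = set (beta_desc B)" using beta_desc_length[OF assms(1)] by (auto simp: set_conv_nth)
  finally show ?thesis using beta_desc_set assms by simp
qed

lemma psize_partition_of_beta: assumes "finite B" "0 \<notin> B"
  shows "psize (partition_of_beta B) + (\<Sum>k<card B. k) = \<Sum> B"
proof -
  let ?m = "card B"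
  have "psize (partition_of_beta B) = (\<Sum>k<?m. beta_desc B ! k - (?m - 1 - k))"
    unfolding psize_def partition_of_beta_eq[OF assms(1)]
    by (simp add: interv_sum_list_conv_sum_set_nat atLeast0LessThan)
  moreover have "(\<Sum>k<?m. k) = (\<Sum>k<?m. ?m - 1 - k)"
    using sum.nat_diff_reindex[of "\<lambda>k. k" ?m] by simp
  moreover have "(\<Sum>k<?m. beta_desc B ! k - (?m - 1 - k)) + (\<Sum>k<?m. ?m - 1 - k) = (\<Sum>k<?m. beta_desc B ! k)"
  proof (subst sum.distrib[symmetric], rule sum.cong)
    fix k assume "k \<in> {..<?m}"
    then have "?m - 1 - k \<le> beta_desc B ! k" using beta_desc_lower[OF assms, of k] by simp
    then show "beta_desc B ! k - (?m - 1 - k) + (?m - 1 - k) = beta_desc B ! k" by simp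
  qed simp
  moreover have "(\<Sum>k<?m. beta_desc B ! k) = \<Sum> B"
  proof -
    have "(\<Sum>k<?m. beta_desc B ! k) = sum_list (beta_desc B)"
      using beta_desc_length[OF assms(1)] by (metis sum_list_sum_nth atLeast0LessThan)
    also have "\<dots> = \<Sum> B" unfolding beta_desc_def using assms by (simp add: sum_list_distinct_conv_sum_set[where f="\<lambda>x. x", simplified])
    finally show ?thesis .
  qed
  ultimately show ?thesis by simp
qed

lemma partition_of_beta_beta: assumes p: "is_partition la" shows "partition_of_beta (beta la) = la"
proof -
  define m where "m = length la"
  define B where "B = beta la"
  have B: "B = first_hook la ` {..<m}" using beta_first_hooks[OF p] unfolding B_def m_def by simp
  have inj: "inj_on (first_hook la) {..<m}"
    by (rule inj_onI) (metis first_hook_strict[OF p] lessThan_iff linorder_neqE_nat m_def order_less_irrefl)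
  have cB: "card B = m" using B inj by (simp add: card_image)
  have fin: "finite B" using B by simp
  have so0: "sorted_wrt (>) (map (first_hook la) [0..<m])"
    unfolding sorted_wrt_iff_nth_less using first_hook_strict[OF p] unfolding m_def by auto
  have so: "sorted_wrt (<) (rev (map (first_hook la) [0..<m]))"
    using so0 by (simp add: sorted_wrt_rev)
  have "sorted_list_of_set B = rev (map (first_hook la) [0..<m])"
  proof -
    have "set (rev (map (first_hook la) [0..<m])) = B" using B by (auto simp: atLeast0LessThan)
    then have "sorted_wrt (<) (rev (map (first_hook la) [0..<m])) \<and> set (rev (map (first_hook la) [0..<m])) = B
       \<and> length (rev (map (first_hook la) [0..<m])) = card B" using so cB by simp
    then show ?thesis using sorted_list_of_set_unique[OF fin] by blast
  qed
  then have hs: "beta_desc B = map (first_hook la) [0..<m]" unfolding beta_desc_def by simp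
  have "partition_of_beta B = map (\<lambda>k. first_hook la k - (m - 1 - k)) [0..<m]"
    using partition_of_beta_eq[OF fin] hs cB by simp
  also have "\<dots> = map (\<lambda>k. la ! k) [0..<m]" unfolding first_hook_def m_def by simp
  also have "\<dots> = la" unfolding m_def by (simp add: map_nth)
  finally show ?thesis unfolding B_def .
qed
definition beta_size :: "nat set \<Rightarrow> nat" where "beta_size B = psize (partition_of_beta B)"

lemma beta_size_insert:
  assumes fin: "finite B" and pos: "0 \<notin> insert x B" and new: "x \<notin> B"
  shows "beta_size (insert x B) + card B = beta_size B + x"
proof -
  have "beta_size (insert x B) + (\<Sum>k<card (insert x B). k) = \<Sum>(insert x B)"
    unfolding beta_size_def using psize_partition_of_beta fin pos by simp
  moreover have "beta_size B + (\<Sum>k<card B. k) = \<Sum>B"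
    unfolding beta_size_def using psize_partition_of_beta fin pos by simp
  ultimately show ?thesis using fin new by simp
qed

section \<open>Cores correspond to closed beta-sets\<close>

definition closed3 :: "nat \<Rightarrow> nat set \<Rightarrow> bool" where
  "closed3 s B \<longleftrightarrow> finite B \<and> 0 \<notin> B \<and> (\<forall>x\<in>B. \<forall>t\<in>{s, s+1, s+2}. t \<le> x \<longrightarrow> x - t \<in> B)"

lemma diff_mult_mem:
  fixes t x q :: nat and B :: "nat set"
  assumes cl: "\<forall>x\<in>B. t \<le> x \<longrightarrow> x - t \<in> B" and xB: "x \<in> B"
  shows "t * q \<le> x \<Longrightarrow> x - t * q \<in> B"
proof (induction q)
  case 0 then show ?case using xB by simp
next
  case (Suc q)
  then have "x - t * q \<in> B" by simp
  moreover have "t \<le> x - t * q" using Suc.prems by simp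
  ultimately have "x - t * q - t \<in> B" using cl by blast
  then show ?case by (simp add: algebra_simps)
qed

text \<open>A closed set is the beta-set of an (s,s+1,s+2)-core: a hook b - y divisible by t would
  let us reach the non-member y from the member b by subtracting copies of t.\<close>
lemma core_partition_of_beta:
  assumes c: "closed3 s B"
  shows "is_core3 s (partition_of_beta B)"
  unfolding is_core3_def
proof
  fix h assume h: "h \<in> hooks (partition_of_beta B)"
  have fin: "finite B" and z: "0 \<notin> B"
    and cl: "\<forall>x\<in>B. \<forall>t\<in>{s, s+1, s+2}. t \<le> x \<longrightarrow> x - t \<in> B"
    using c unfolding closed3_def by auto
  obtain b y where gap: "b \<in> B" "y < b" "y \<notin> B" "h = b - y"
    using h unfolding hooks_beta_gaps[OF partition_of_beta_is_partition[OF fin z]]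
      beta_partition_of_beta[OF fin z] by blast
  have "\<not> t dvd h" if t: "t \<in> {s, s+1, s+2}" for t
  proof
    assume "t dvd h"
    then obtain q where q: "h = t * q" by blast
    have "\<forall>x\<in>B. t \<le> x \<longrightarrow> x - t \<in> B" using cl t by blast
    then have "b - t * q \<in> B" using diff_mult_mem[of B t b q] gap q by simp
    moreover have "b - t * q = y" using gap q by simp
    ultimately show False using gap(3) by simp
  qed
  then show "\<not> s dvd h \<and> \<not> (s + 1) dvd h \<and> \<not> (s + 2) dvd h" by simp
qed

text \<open>Conversely the beta-set of a core is closed: if b is a beta-number and b - t is not,
  then t itself is a hook length.\<close>
lemma closed3_beta:
  assumes p: "is_partition la" and c: "is_core3 s la" and s: "0 < s"
  shows "closed3 s (beta la)"
  unfolding closed3_def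
proof (intro conjI ballI impI)
  show "finite (beta la)" unfolding beta_first_hooks[OF p] by simp
  show "0 \<notin> beta la"
    using partition_pos[OF p] unfolding beta_first_hooks[OF p] first_hook_def by fastforce
next
  fix x t assume x: "x \<in> beta la" and t: "t \<in> {s, s+1, s+2}" and tx: "t \<le> x"
  show "x - t \<in> beta la"
  proof (rule ccontr)
    assume n: "x - t \<notin> beta la"
    have "x - t < x" using t s tx by auto
    then have "t \<in> hooks la"
      unfolding hooks_beta_gaps[OF p] using x n tx by (intro CollectI exI[of _ x] exI[of _ "x - t"]) simp
    then have "\<not> s dvd t \<and> \<not> (s+1) dvd t \<and> \<not> (s+2) dvd t" using c unfolding is_core3_def by blast
    moreover have "t = s \<or> t = s+1 \<or> t = s+2" using t by simp
    ultimately show False by auto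
  qed
qed

section \<open>Levels of a closed set\<close>

definition level :: "nat \<Rightarrow> nat \<Rightarrow> nat set" where
  "level s k = {x. k*s + 2*k < x \<and> x < k*s + s}"

lemma level_bound: "x \<in> level s k \<Longrightarrow> 2*k + 2 \<le> s"
  unfolding level_def by simp

lemma level_pos: "x \<in> level s k \<Longrightarrow> 0 < x"
  unfolding level_def by simp

lemma level_unique: assumes "x \<in> level s k" "x \<in> level s k'" shows "k = k'"
proof (rule ccontr)
  assume "k \<noteq> k'"
  then consider "k + 1 \<le> k'" | "k' + 1 \<le> k" by linarith
  then show False
  proof cases
    case 1
    then have "(k+1)*s \<le> k'*s" by (intro mult_le_mono1)
    then show False using assms unfolding level_def by (simp add: algebra_simps)
  next
    case 2
    then have "(k'+1)*s \<le> k*s" by (intro mult_le_mono1)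
    then show False using assms unfolding level_def by (simp add: algebra_simps)
  qed
qed

text \<open>Every element of a closed set lies in some level: if x - (s+2) lies in level k then the
  presence of x - s forces x into level k+1 (strong induction on x).\<close>
lemma closed3_in_level:
  assumes c: "closed3 s B" and s: "0 < s"
  shows "x \<in> B \<Longrightarrow> \<exists>k. x \<in> level s k"
proof (induction x rule: less_induct)
  case (less x)
  have z: "0 \<notin> B" and cl: "\<forall>x\<in>B. \<forall>t\<in>{s, s+1, s+2}. t \<le> x \<longrightarrow> x - t \<in> B"
    using c unfolding closed3_def by auto
  show ?case
  proof (cases "x < s")
    case True
    moreover have "0 < x" using less.prems z by (metis gr0I)
    ultimately have "x \<in> level s 0" unfolding level_def by simp
    then show ?thesis by blast
  next
    case False
    have a1: "x - s \<in> B" using cl less.prems False by auto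
    then have xs: "x \<noteq> s" using z by auto
    then have a2: "x - (s+1) \<in> B" using cl less.prems False by auto
    then have "x \<noteq> s + 1" using z by auto
    then have x2: "s + 2 \<le> x" using False xs by simp
    then have a3: "x - (s+2) \<in> B" using cl less.prems by auto
    obtain k1 where k1: "x - (s+2) \<in> level s k1" using less.IH[of "x - (s+2)"] a3 x2 s by auto
    obtain k2 where k2: "x - s \<in> level s k2" using less.IH[of "x - s"] a1 x2 s by auto
    have "k2 \<le> k1"
    proof (rule ccontr)
      assume "\<not> k2 \<le> k1"
      then have kk: "k1 + 1 \<le> k2" by simp
      then have "(k1+1)*s \<le> k2*s" by (intro mult_le_mono1)
      then show False using k1 k2 x2 kk unfolding level_def by (auto simp: algebra_simps)
    qed
    then have pk: "k2*s \<le> k1*s" by (intro mult_le_mono1)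
    have f1: "k1*s + 2*k1 < x - (s+2)" "x - (s+2) < k1*s + s" using k1 unfolding level_def by auto
    have f2: "x - s < k2*s + s" using k2 unfolding level_def by auto
    have "x \<in> level s (Suc k1)" unfolding level_def mem_Collect_eq mult_Suc mult_Suc_right
      using f1 f2 pk x2 by (intro conjI; linarith)
    then show ?thesis by blast
  qed
qed

lemma closed3_levels: assumes "closed3 s B" "0 < s" shows "B \<subseteq> (\<Union>k<s. level s k)"
proof
  fix x assume "x \<in> B"
  then obtain k where k: "x \<in> level s k" using closed3_in_level assms by blast
  then have "k < s" using level_bound[OF k] by simp
  then show "x \<in> (\<Union>k<s. level s k)" using k by blast
qed

definition level_count :: "nat \<Rightarrow> nat set \<Rightarrow> nat \<Rightarrow> nat" where
  "level_count s B k = card (B \<inter> level s k)"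

definition admissible :: "nat \<Rightarrow> (nat \<Rightarrow> nat) \<Rightarrow> bool" where
  "admissible s n \<longleftrightarrow> n 0 + 1 \<le> s \<and> (\<forall>k. 0 < n (Suc k) \<longrightarrow> n (Suc k) + 2 \<le> n k)"

lemma admissible_bound: assumes "admissible s n" shows "0 < n k \<Longrightarrow> n k + 2*k + 1 \<le> s"
proof (induction k)
  case 0 then show ?case using assms unfolding admissible_def by simp
next
  case (Suc k)
  then have "n (Suc k) + 2 \<le> n k" using assms unfolding admissible_def by blast
  with Suc show ?case by simp
qed

text \<open>A nonempty level k+1 of a closed set forces at least two more elements in level k:
  subtracting s+2 maps level k+1 injectively into level k, and subtracting s and s+1 from the
  largest element a of level k+1 gives two further elements of level k, both above a - (s+2).\<close>
lemma closed3_level_step: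
  assumes c: "closed3 s B" and pos: "0 < level_count s B (Suc k)"
  shows "level_count s B (Suc k) + 2 \<le> level_count s B k"
proof -
  have fin: "finite B" and cl: "\<forall>x\<in>B. \<forall>t\<in>{s, s+1, s+2}. t \<le> x \<longrightarrow> x - t \<in> B"
    using c unfolding closed3_def by auto
  let ?C = "B \<inter> level s (Suc k)"
  have finC: "finite ?C" using fin by simp
  have neC: "?C \<noteq> {}" using pos unfolding level_count_def by auto
  define a where "a = Max ?C"
  have aC: "a \<in> ?C" unfolding a_def using finC neC by (rule Max_in)
  have amax: "\<And>x. x \<in> ?C \<Longrightarrow> x \<le> a" unfolding a_def using finC by simp
  have big: "\<And>x. x \<in> ?C \<Longrightarrow> s + 2 \<le> x \<and> x \<in> B \<and> k*s + 2*k + s + 2 < x \<and> x < k*s + s + s"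
    unfolding level_def by (auto simp: algebra_simps)
  let ?f = "\<lambda>x. x - (s+2)"
  let ?D = "insert (a - s) (insert (a - (s+1)) (?f ` ?C))"
  have inj: "inj_on ?f ?C"
    by (rule inj_onI) (use big in fastforce)
  have "?f ` ?C \<subseteq> B \<inter> level s k"
    using cl big unfolding level_def by auto
  moreover have "a - s \<in> B \<inter> level s k" "a - (s+1) \<in> B \<inter> level s k"
    using cl big[OF aC] unfolding level_def by auto
  ultimately have sub: "card ?D \<le> card (B \<inter> level s k)"
    using fin by (intro card_mono) auto
  have notin: "a - s \<notin> ?f ` ?C" "a - (s+1) \<notin> ?f ` ?C"
    using amax big[OF aC] big by force+
  have "a - s \<noteq> a - (s+1)" using big[OF aC] by linarith
  then have "card ?D = card ?C + 2"
    using notin inj finC by (simp add: card_image)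
  with sub show ?thesis unfolding level_count_def by simp
qed

lemma level_count_admissible:
  assumes c: "closed3 s B" and s: "0 < s"
  shows "admissible s (level_count s B)"
  unfolding admissible_def
proof (intro conjI allI impI)
  have "B \<inter> level s 0 \<subseteq> {1..<s}" unfolding level_def by auto
  then have "card (B \<inter> level s 0) \<le> s - 1" by (metis card_atLeastLessThan card_mono finite_atLeastLessThan)
  then show "level_count s B 0 + 1 \<le> s" unfolding level_count_def using s by simp
qed (rule closed3_level_step[OF c])

section \<open>Top-justified closed sets\<close>

definition top_block :: "nat \<Rightarrow> nat \<Rightarrow> nat \<Rightarrow> nat set" where
  "top_block s k v = {k*s + s - v ..< k*s + s}"

definition top_set :: "nat \<Rightarrow> (nat \<Rightarrow> nat) \<Rightarrow> nat set" where
  "top_set s n = (\<Union>k<s. top_block s k (n k))"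

lemma top_block_level: assumes "admissible s n" shows "top_block s k (n k) \<subseteq> level s k"
proof
  fix x assume x: "x \<in> top_block s k (n k)"
  then have "0 < n k" unfolding top_block_def by auto
  then have "n k + 2*k + 1 \<le> s" using admissible_bound[OF assms] by simp
  then show "x \<in> level s k" using x unfolding top_block_def level_def by auto
qed

lemma card_top_block: "v \<le> k*s + s \<Longrightarrow> card (top_block s k v) = v"
  unfolding top_block_def by simp

lemma top_blocks_disjoint: assumes "admissible s n" "k \<noteq> k'" shows "top_block s k (n k) \<inter> top_block s k' (n k') = {}"
  using top_block_level[OF assms(1), of k] top_block_level[OF assms(1), of k'] level_unique assms(2) by blast

text \<open>For admissible counts the top set is closed: subtracting s, s+1 or s+2 from the top block
  of level k+1 lands in the (longer) top block of level k, and level 0 has nothing below it.\<close>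
lemma top_set_closed3: assumes a: "admissible s n" and s: "0 < s" shows "closed3 s (top_set s n)"
  unfolding closed3_def
proof (intro conjI)
  show "finite (top_set s n)" unfolding top_set_def top_block_def by simp
  show "0 \<notin> top_set s n" unfolding top_set_def using top_block_level[OF a] level_pos by blast
  show "\<forall>x\<in>top_set s n. \<forall>t\<in>{s, s + 1, s + 2}. t \<le> x \<longrightarrow> x - t \<in> top_set s n"
  proof (intro ballI impI)
    fix x t assume x: "x \<in> top_set s n" and t: "t \<in> {s, s+1, s+2}" and tx: "t \<le> x"
    obtain k where k: "k < s" "x \<in> top_block s k (n k)" using x unfolding top_set_def by blast
    have ts: "s \<le> t" "t \<le> s + 2" using t by auto
    show "x - t \<in> top_set s n"
    proof (cases k)
      case 0 then show ?thesis using k ts tx unfolding top_block_def by simp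
    next
      case (Suc k')
      have pos: "0 < n (Suc k')" using k Suc unfolding top_block_def by auto
      then have d: "n (Suc k') + 2 \<le> n k'" using a unfolding admissible_def by blast
      have b: "n k' + 2*k' + 1 \<le> s" using admissible_bound[OF a] d by simp
      have "x - t \<in> top_block s k' (n k')" using k Suc ts tx d b unfolding top_block_def
        by (auto simp: algebra_simps)
      moreover have "k' < s" using k Suc by simp
      ultimately show ?thesis unfolding top_set_def by blast
    qed
  qed
qed

lemma card_top_set: assumes a: "admissible s n" shows "card (top_set s n) = (\<Sum>k<s. n k)"
proof -
  have "card (top_set s n) = (\<Sum>k<s. card (top_block s k (n k)))"
    unfolding top_set_def by (rule card_UN_disjoint) (auto simp: top_block_def dest: top_blocks_disjoint[OF a])
  also have "\<dots> = (\<Sum>k<s. n k)"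
  proof (rule sum.cong)
    fix k assume "k \<in> {..<s}"
    show "card (top_block s k (n k)) = n k"
    proof (cases "n k = 0")
      case True then show ?thesis unfolding top_block_def by simp
    next
      case False
      then have "n k + 2*k + 1 \<le> s" using admissible_bound[OF a] by simp
      then show ?thesis by (intro card_top_block) simp
    qed
  qed simp
  finally show ?thesis .
qed

lemma sum_top_set: assumes a: "admissible s n" shows "\<Sum>(top_set s n) = (\<Sum>k<s. \<Sum>(top_block s k (n k)))"
  unfolding top_set_def by (rule sum.UNION_disjoint) (auto simp: top_block_def dest: top_blocks_disjoint[OF a])

lemma sum_interval_shift:
  assumes "m \<le> U"
  shows "\<Sum>{Suc U - m..<Suc U} = \<Sum>{U - m..<U} + m"
proof -
  have "\<Sum>{Suc U - m..<Suc U} = (\<Sum>i\<in>{U - m..<U}. i + 1)"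
    using assms sum.shift_bounds_nat_ivl[of "\<lambda>i. i" "U - m" 1 U] by (simp add: Suc_diff_le)
  also have "\<dots> = \<Sum>{U - m..<U} + card {U - m..<U}" by (simp only: sum.distrib) simp
  also have "\<dots> = \<Sum>{U - m..<U} + m" using assms by simp
  finally show ?thesis .
qed

text \<open>By induction on U: if U \<in> A, remove it; otherwise
  A lies below U and its top interval in {..<U} is beaten by the one shifted up by one.\<close>
lemma sum_le_top_interval:
  fixes A :: "nat set"
  shows "A \<subseteq> {..<U} \<Longrightarrow> \<Sum>A \<le> \<Sum>{U - card A..<U} \<and> (\<Sum>A = \<Sum>{U - card A..<U} \<longrightarrow> A = {U - card A..<U})"
proof (induction U arbitrary: A)
  case 0 then show ?case by simp
next
  case (Suc U)
  have finA: "finite A" using Suc.prems finite_subset by blast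
  show ?case
  proof (cases "U \<in> A")
    case True
    let ?A' = "A - {U}"
    have sub: "?A' \<subseteq> {..<U}" using Suc.prems by auto
    have "0 < card A" using True finA card_gt_0_iff by blast
    then have cA: "card A = card ?A' + 1" using True finA by (simp add: card_Diff_singleton)
    have cle: "card ?A' \<le> U" using card_mono[OF _ sub] by simp
    have ih: "\<Sum>?A' \<le> \<Sum>{U - card ?A'..<U}" "\<Sum>?A' = \<Sum>{U - card ?A'..<U} \<longrightarrow> ?A' = {U - card ?A'..<U}"
      using Suc.IH[OF sub] by auto
    have sA: "\<Sum>A = U + \<Sum>?A'" using True finA by (simp add: sum.remove)
    have iv: "{Suc U - card A..<Suc U} = insert U {U - card ?A'..<U}" using cA cle by auto
    have sI: "\<Sum>{Suc U - card A..<Suc U} = U + \<Sum>{U - card ?A'..<U}" unfolding iv by simp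
    show ?thesis
    proof
      show "\<Sum>A \<le> \<Sum>{Suc U - card A..<Suc U}" using sA sI ih by simp
      show "\<Sum>A = \<Sum>{Suc U - card A..<Suc U} \<longrightarrow> A = {Suc U - card A..<Suc U}"
      proof
        assume "\<Sum>A = \<Sum>{Suc U - card A..<Suc U}"
        then have "?A' = {U - card ?A'..<U}" using sA sI ih by simp
        then show "A = {Suc U - card A..<Suc U}" unfolding iv using True by blast
      qed
    qed
  next
    case False
    have sub: "A \<subseteq> {..<U}" using Suc.prems False by (auto simp: less_Suc_eq)
    have cle: "card A \<le> U" using card_mono[OF _ sub] by simp
    have ih: "\<Sum>A \<le> \<Sum>{U - card A..<U}" "\<Sum>A = \<Sum>{U - card A..<U} \<longrightarrow> A = {U - card A..<U}"
      using Suc.IH[OF sub] by auto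
    have shift: "\<Sum>{Suc U - card A..<Suc U} = \<Sum>{U - card A..<U} + card A"
      using sum_interval_shift[OF cle] .
    show ?thesis
    proof
      show "\<Sum>A \<le> \<Sum>{Suc U - card A..<Suc U}" using shift ih by simp
      show "\<Sum>A = \<Sum>{Suc U - card A..<Suc U} \<longrightarrow> A = {Suc U - card A..<Suc U}"
      proof
        assume e: "\<Sum>A = \<Sum>{Suc U - card A..<Suc U}"
        then have "card A = 0" using shift ih by simp
        then have "A = {}" using finA by simp
        then show "A = {Suc U - card A..<Suc U}" by simp
      qed
    qed
  qed
qed

lemma closed3_level_sums:
  assumes c: "closed3 s B" and s: "0 < s"
  shows "card B = (\<Sum>k<s. level_count s B k)" and "\<Sum>B = (\<Sum>k<s. \<Sum>(B \<inter> level s k))"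
proof -
  have fin: "finite B" using c unfolding closed3_def by simp
  have Bu: "B = (\<Union>k<s. B \<inter> level s k)" using closed3_levels[OF c s] by blast
  have disj: "\<And>k k'. k \<noteq> k' \<Longrightarrow> (B \<inter> level s k) \<inter> (B \<inter> level s k') = {}"
    using level_unique by blast
  have "card (\<Union>k<s. B \<inter> level s k) = (\<Sum>k<s. card (B \<inter> level s k))"
    by (rule card_UN_disjoint) (use fin disj in auto)
  then show "card B = (\<Sum>k<s. level_count s B k)" using Bu unfolding level_count_def by simp
  have "\<Sum>(\<Union>k<s. B \<inter> level s k) = (\<Sum>k<s. \<Sum>(B \<inter> level s k))"
    by (rule sum.UNION_disjoint) (use fin disj in auto)
  then show "\<Sum>B = (\<Sum>k<s. \<Sum>(B \<inter> level s k))" using Bu by simp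
qed

lemma closed3_le_top_set:
  assumes c: "closed3 s B" and s: "0 < s"
  shows "card (top_set s (level_count s B)) = card B \<and> \<Sum>B \<le> \<Sum>(top_set s (level_count s B))
         \<and> (\<Sum>B = \<Sum>(top_set s (level_count s B)) \<longrightarrow> B = top_set s (level_count s B))"
proof -
  let ?n = "level_count s B"
  have a: "admissible s ?n" using level_count_admissible[OF c s] .
  have lvl: "\<Sum>(B \<inter> level s k) \<le> \<Sum>(top_block s k (?n k)) \<and>
     (\<Sum>(B \<inter> level s k) = \<Sum>(top_block s k (?n k)) \<longrightarrow> B \<inter> level s k = top_block s k (?n k))" for k
  proof -
    have "B \<inter> level s k \<subseteq> {..<k*s + s}" unfolding level_def by auto
    from sum_le_top_interval[OF this] show ?thesis unfolding top_block_def level_count_def by simp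
  qed
  note sums = closed3_level_sums[OF c s] sum_top_set[OF a]
  have "\<Sum>B \<le> \<Sum>(top_set s ?n)" unfolding sums using lvl by (intro sum_mono) blast
  moreover have "\<Sum>B = \<Sum>(top_set s ?n) \<longrightarrow> B = top_set s ?n"
  proof
    assume "\<Sum>B = \<Sum>(top_set s ?n)"
    then have eq: "(\<Sum>k<s. \<Sum>(B \<inter> level s k)) = (\<Sum>k<s. \<Sum>(top_block s k (?n k)))"
      unfolding sums .
    have "\<Sum>(B \<inter> level s k) = \<Sum>(top_block s k (?n k))" if "k < s" for k
      by (rule sum_mono_inv[OF eq]) (use lvl that in auto)
    then have "B \<inter> level s k = top_block s k (?n k)" if "k < s" for k using lvl that by blast
    then have "(\<Union>k<s. B \<inter> level s k) = top_set s ?n" unfolding top_set_def by auto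
    then show "B = top_set s ?n" using closed3_levels[OF c s] by blast
  qed
  moreover have "card (top_set s ?n) = card B" using card_top_set[OF a] sums by simp
  ultimately show ?thesis by blast
qed

lemma top_block_Suc: "v + 1 \<le> k*s + s \<Longrightarrow> top_block s k (v + 1) = insert (k*s + s - v - 1) (top_block s k v)"
  unfolding top_block_def by auto

lemma top_set_raise:
  assumes a: "admissible s n" and a': "admissible s (n(l := n l + 1))"
  shows "top_set s (n(l := n l + 1)) = insert (l*s + s - n l - 1) (top_set s n) \<and> l*s + s - n l - 1 \<notin> top_set s n"
proof -
  let ?n' = "n(l := n l + 1)"
  let ?x = "l*s + s - n l - 1"
  have b: "n l + 1 + 2*l + 1 \<le> s" using admissible_bound[OF a', of l] by simp
  then have ls: "l < s" by simp
  have nb: "n l + 1 \<le> l*s + s" using b by linarith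
  from top_block_Suc[OF nb] have ti: "top_block s l (?n' l) = insert ?x (top_block s l (n l))" by simp
  have eq: "top_set s ?n' = insert ?x (top_set s n)"
  proof
    show "top_set s ?n' \<subseteq> insert ?x (top_set s n)" unfolding top_set_def using ti
      by (auto split: if_splits)
    show "insert ?x (top_set s n) \<subseteq> top_set s ?n'" unfolding top_set_def using ti ls
      by (auto split: if_splits)
  qed
  have xl: "?x \<in> level s l" using top_block_level[OF a', of l] ti by auto
  have "?x \<notin> top_block s l (n l)" using nb unfolding top_block_def by auto
  moreover have "?x \<notin> top_block s k (n k)" if "k \<noteq> l" for k
    using top_block_level[OF a, of k] xl level_unique that by blast
  ultimately have "?x \<notin> top_set s n" unfolding top_set_def
    by (metis (no_types, lifting) UN_E)
  with eq show ?thesis by blast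
qed

lemma top_block_pred: "0 < v \<Longrightarrow> v \<le> k*s + s \<Longrightarrow> top_block s k (v - 1) = top_block s k v - {k*s + s - v}"
  unfolding top_block_def by auto

lemma top_set_lower:
  assumes a: "admissible s n" and a': "admissible s (n(l := n l - 1))" and p: "0 < n l"
  shows "top_set s (n(l := n l - 1)) = top_set s n - {l*s + s - n l} \<and> l*s + s - n l \<in> top_set s n"
proof -
  let ?n' = "n(l := n l - 1)"
  let ?x = "l*s + s - n l"
  have b: "n l + 2*l + 1 \<le> s" using admissible_bound[OF a p] by simp
  then have ls: "l < s" by simp
  have "n l \<le> l*s + s" using b by linarith
  from top_block_pred[OF p this] have ti: "top_block s l (?n' l) = top_block s l (n l) - {?x}" by simp
  have xt: "?x \<in> top_block s l (n l)" using p b unfolding top_block_def by auto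
  have xl: "?x \<in> level s l" using top_block_level[OF a, of l] xt by auto
  have oth: "?x \<notin> top_block s k (n k)" if "k \<noteq> l" for k
    using top_block_level[OF a, of k] xl level_unique that by blast
  have eq: "top_set s ?n' = top_set s n - {?x}"
  proof
    show "top_set s ?n' \<subseteq> top_set s n - {?x}" unfolding top_set_def using ti oth
      by (auto split: if_splits)
    show "top_set s n - {?x} \<subseteq> top_set s ?n'" unfolding top_set_def using ti ls
      by (auto split: if_splits)
  qed
  moreover have "?x \<in> top_set s n" using xt ls unfolding top_set_def by blast
  ultimately show ?thesis by blast
qed


section \<open>Closed sets of maximal partition size\<close>

text \<open>A closed set whose partition is of maximal size equals its own top set: both have the same
  cardinality, so the size formula turns maximality into maximality of the sum.\<close>
lemma maximal_closed_is_top_set: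
  assumes s: "0 < s" and c: "closed3 s B"
    and mx: "\<forall>B'. closed3 s B' \<longrightarrow> beta_size B' \<le> beta_size B"
  shows "B = top_set s (level_count s B)"
proof -
  define T where "T = top_set s (level_count s B)"
  have cT: "closed3 s T" unfolding T_def using top_set_closed3[OF level_count_admissible[OF c s] s] .
  have bt: "card T = card B" "\<Sum>B \<le> \<Sum>T" "\<Sum>B = \<Sum>T \<longrightarrow> B = T"
    using closed3_le_top_set[OF c s] unfolding T_def by auto
  have "beta_size T + (\<Sum>k<card B. k) = \<Sum>T"
    using cT psize_partition_of_beta bt(1) unfolding closed3_def beta_size_def by metis
  moreover have "beta_size B + (\<Sum>k<card B. k) = \<Sum>B"
    using c psize_partition_of_beta unfolding closed3_def beta_size_def by blast
  moreover have "beta_size T \<le> beta_size B" using mx cT by blast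
  ultimately have "\<Sum>B = \<Sum>T" using bt(1,2) by linarith
  then show ?thesis using bt(3) unfolding T_def by simp
qed

lemma admissible_raise:
  assumes a: "admissible s n" and big: "n (Suc l) + 3 \<le> n l"
  shows "admissible s (n(Suc l := n (Suc l) + 1))" (is "admissible s ?n")
  unfolding admissible_def
proof (intro conjI allI impI)
  show "?n 0 + 1 \<le> s" using a unfolding admissible_def by simp
  fix k assume pos: "0 < ?n (Suc k)"
  consider "k = l" | "k = Suc l" | "k \<noteq> l" "k \<noteq> Suc l" by blast
  then show "?n (Suc k) + 2 \<le> ?n k"
  proof cases
    case 1 then show ?thesis using big by simp
  next
    case 2
    then have "0 < n (Suc (Suc l))" using pos by simp
    then have "n (Suc (Suc l)) + 2 \<le> n (Suc l)" using a unfolding admissible_def by blast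
    then show ?thesis using 2 by simp
  next
    case 3 then show ?thesis using a pos unfolding admissible_def by auto
  qed
qed

lemma admissible_lower:
  assumes a: "admissible s n" and big: "n (Suc l) + 3 \<le> n l"
  shows "admissible s (n(l := n l - 1))" (is "admissible s ?n")
  unfolding admissible_def
proof (intro conjI allI impI)
  show "?n 0 + 1 \<le> s" using a unfolding admissible_def by auto
  fix k assume pos: "0 < ?n (Suc k)"
  consider "k = l" | "Suc k = l" | "k \<noteq> l" "Suc k \<noteq> l" by blast
  then show "?n (Suc k) + 2 \<le> ?n k"
  proof cases
    case 1 then show ?thesis using big by simp
  next
    case 2
    have "0 < n l" using big by simp
    then have "n l + 2 \<le> n k" using a 2 unfolding admissible_def by blast
    then show ?thesis using 2 by auto
  next
    case 3 then show ?thesis using a pos unfolding admissible_def by auto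
  qed
qed

text \<open>In a maximal top set T consecutive counts differ by at most 2.  Otherwise adding the
  element x1 just below the top block of level l+1 must not increase the size (so x1 \<le> |T|),
  and removing the least element x2 of the top block of level l must not increase it either
  (so |T| \<le> x2 + 1); but x1 > x2 + 1, as level l+1 lies s above level l.\<close>
lemma maximal_counts_step:
  assumes s: "0 < s" and a: "admissible s n"
    and mx: "\<forall>B'. closed3 s B' \<longrightarrow> beta_size B' \<le> beta_size (top_set s n)"
  shows "n l \<le> n (Suc l) + 2"
proof (rule ccontr)
  assume "\<not> ?thesis"
  then have big: "n (Suc l) + 3 \<le> n l" by simp
  define T where "T = top_set s n"
  have cT: "closed3 s T" unfolding T_def using top_set_closed3[OF a s] .
  then have finT: "finite T" and zT: "0 \<notin> T" unfolding closed3_def by auto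
  define x1 where "x1 = Suc l * s + s - n (Suc l) - 1"
  have a1: "admissible s (n(Suc l := n (Suc l) + 1))" using admissible_raise[OF a big] .
  have up: "top_set s (n(Suc l := n (Suc l) + 1)) = insert x1 T" "x1 \<notin> T"
    using top_set_raise[OF a a1] unfolding x1_def T_def by auto
  have "closed3 s (insert x1 T)" using top_set_closed3[OF a1 s] up(1) by simp
  then have "beta_size (insert x1 T) \<le> beta_size T" and "0 \<notin> insert x1 T"
    using mx unfolding T_def closed3_def by auto
  then have ineq1: "x1 \<le> card T" using beta_size_insert[OF finT _ up(2)] by simp
  define x2 where "x2 = l * s + s - n l"
  have pos: "0 < n l" using big by simp
  have a2: "admissible s (n(l := n l - 1))" using admissible_lower[OF a big] .
  have down: "top_set s (n(l := n l - 1)) = T - {x2}" "x2 \<in> T"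
    using top_set_lower[OF a a2 pos] unfolding x2_def T_def by auto
  have "closed3 s (T - {x2})" using top_set_closed3[OF a2 s] down(1) by simp
  then have "beta_size (T - {x2}) \<le> beta_size T" using mx unfolding T_def by blast
  moreover have "beta_size T + card (T - {x2}) = beta_size (T - {x2}) + x2"
    using beta_size_insert[of "T - {x2}" x2] finT zT down(2) by (simp add: insert_absorb)
  moreover have "card T = Suc (card (T - {x2}))" using finT down(2) by (metis card_Suc_Diff1)
  ultimately have ineq2: "card T \<le> x2 + 1" by simp
  have b1: "n (Suc l) + 1 + 2 * Suc l + 1 \<le> s" using admissible_bound[OF a1, of "Suc l"] by simp
  have bl: "n l + 2 * l + 1 \<le> s" using admissible_bound[OF a pos] .
  have "Suc l * s = l * s + s" by simp
  then show False using ineq1 ineq2 big b1 bl unfolding x1_def x2_def by linarith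
qed

lemma staircase_counts:
  assumes a: "admissible s n" and step: "\<And>l. n l \<le> n (Suc l) + 2"
  shows "n k = n 0 - 2*k"
proof (induction k)
  case 0 then show ?case by simp
next
  case (Suc k)
  show ?case
  proof (cases "0 < n (Suc k)")
    case True
    then have "n (Suc k) + 2 \<le> n k" using a unfolding admissible_def by blast
    then show ?thesis using step[of k] Suc by simp
  next
    case False
    then show ?thesis using step[of k] Suc by simp
  qed
qed

lemma maximal_closed_staircase:
  assumes s: "0 < s" and c: "closed3 s B"
    and mx: "\<forall>B'. closed3 s B' \<longrightarrow> beta_size B' \<le> beta_size B"
  shows "\<exists>c. c + 1 \<le> s \<and> B = top_set s (\<lambda>k. c - 2*k)"
proof -
  define n where "n = level_count s B"
  have a: "admissible s n" unfolding n_def using level_count_admissible[OF c s] .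
  have BT: "B = top_set s n" unfolding n_def using maximal_closed_is_top_set[OF s c mx] .
  have "\<forall>B'. closed3 s B' \<longrightarrow> beta_size B' \<le> beta_size (top_set s n)"
    using mx BT by simp
  then have "n k = n 0 - 2*k" for k
    using staircase_counts[OF a maximal_counts_step[OF s a]] by blast
  then have "n = (\<lambda>k. n 0 - 2*k)" by blast
  moreover have "n 0 + 1 \<le> s" using a unfolding admissible_def by simp
  ultimately show ?thesis using BT by metis
qed

section \<open>The staircase top sets are the beta-sets beta_(i,j)\<close>

text \<open>The top set of the staircase c, c-2, c-4, ... is beta_(s-c, ceil(c/2)): in level k it
  consists of the single element (s-c) + k(s+2) together with the interval of beta_(s-c,0).\<close>
lemma top_set_staircase:
  assumes cs: "c + 1 \<le> s"
  shows "top_set s (\<lambda>k. c - 2*k) = betaij s (s - c) ((c+1) div 2)"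
proof (rule set_eqI; rule iffI)
  fix x assume "x \<in> top_set s (\<lambda>k. c - 2*k)"
  then obtain k where k: "k < s" "k*s + s - (c - 2*k) \<le> x" "x < k*s + s"
    unfolding top_set_def top_block_def by auto
  have kc: "2*k < c" using k by (cases "2*k < c") auto
  have e: "k*s + s - (c - 2*k) = (s - c) + k*(s+2)" using kc cs by (simp add: algebra_simps)
  show "x \<in> betaij s (s - c) ((c+1) div 2)"
  proof (cases "x = (s - c) + k*(s+2)")
    case True
    moreover have "k < (c+1) div 2" using kc by simp
    ultimately show ?thesis unfolding betaij_def by blast
  next
    case False
    then have "s - c + 1 + k*(s+2) \<le> x" using k e by simp
    moreover have "x + 1 \<le> (k+1)*s" using k by simp
    ultimately show ?thesis unfolding betaij_def beta0_def by blast
  qed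
next
  fix x assume "x \<in> betaij s (s - c) ((c+1) div 2)"
  then consider (A) k where "s - c + 1 + k*(s+2) \<le> x" "x + 1 \<le> (k+1)*s"
    | (B) p where "p < (c+1) div 2" "x = s - c + p*(s+2)"
    unfolding betaij_def beta0_def by blast
  then show "x \<in> top_set s (\<lambda>k. c - 2*k)"
  proof cases
    case A
    have "s - c + 1 + k*s + 2*k \<le> k*s + s - 1" using A by (simp add: algebra_simps)
    then have kc: "2*k + 2 \<le> c" using cs by linarith
    then have "k < s" using cs by simp
    moreover have "k*s + s - (c - 2*k) \<le> x" "x < k*s + s"
      using A kc cs by (auto simp: algebra_simps)
    ultimately show ?thesis unfolding top_set_def top_block_def by auto
  next
    case B
    then have pc: "2*p < c" by simp
    then have "p < s" using cs by simp
    moreover have "p*s + s - (c - 2*p) \<le> x" "x < p*s + s"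
      using B pc cs by (auto simp: algebra_simps)
    ultimately show ?thesis unfolding top_set_def top_block_def by auto
  qed
qed


text \<open>For i \<ge> s - 1 the set beta_(i,0) is empty; this identifies the empty staircase (c = 0,
  i.e. i = s) with the empty partition lambda_(s-1,0).\<close>
lemma beta0_empty: assumes "s \<le> i + 1" shows "beta0 s i = {}"
proof -
  have "\<not> (i + 1 + k*(s+2) \<le> x \<and> x + 1 \<le> (k+1)*s)" for k x
  proof
    assume h: "i + 1 + k*(s+2) \<le> x \<and> x + 1 \<le> (k+1)*s"
    have "k*(s+2) = k*s + 2*k" "(k+1)*s = k*s + s" by (simp_all add: algebra_simps)
    then show False using h assms by linarith
  qed
  then show ?thesis unfolding beta0_def by blast
qed

lemma staircase_lambdaij:
  assumes s: "2 \<le> s" and cs: "c + 1 \<le> s"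
  shows "\<exists>i j. 1 \<le> i \<and> i \<le> s - 1 \<and> j \<le> (s - i + 1) div 2
           \<and> partition_of_beta (top_set s (\<lambda>k. c - 2*k)) = lambdaij s i j"
proof (cases "c = 0")
  case True
  then have "top_set s (\<lambda>k. c - 2*k) = betaij s (s - 1) 0"
    using top_set_staircase[OF cs] beta0_empty[of s s] beta0_empty[of s "s - 1"]
    unfolding betaij_def by simp
  then show ?thesis using s unfolding lambdaij_def by (intro exI[of _ "s - 1"] exI[of _ 0]) auto
next
  case False
  then show ?thesis using top_set_staircase[OF cs] cs unfolding lambdaij_def
    by (intro exI[of _ "s - c"] exI[of _ "(c+1) div 2"]) auto
qed

text \<open>The beta-set of a core of maximal size has maximal partition size among all closed sets,
  since every closed set is the beta-set of a core.\<close>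
lemma maximal_core_beta:
  assumes p: "is_partition la"
    and mx: "\<forall>mu. is_partition mu \<and> is_core3 s mu \<longrightarrow> psize mu \<le> psize la"
    and c: "closed3 s B"
  shows "beta_size B \<le> beta_size (beta la)"
proof -
  have "is_partition (partition_of_beta B)"
    using c partition_of_beta_is_partition unfolding closed3_def by blast
  then show ?thesis
    using mx core_partition_of_beta[OF c] partition_of_beta_beta[OF p] unfolding beta_size_def by simp
qed

theorem lemma3p2:
  fixes s :: nat and la :: "nat list"
  assumes "s \<ge> 3"
    and "is_partition la" and "is_core3 s la"
    and "\<forall>mu. is_partition mu \<and> is_core3 s mu \<longrightarrow> psize mu \<le> psize la"
  shows "\<exists>i j. 1 \<le> i \<and> i \<le> s - 1 \<and> j \<le> (s - i + 1) div 2 \<and> la = lambdaij s i j"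
proof -
  have s: "0 < s" using assms(1) by simp
  have "closed3 s (beta la)" using closed3_beta[OF assms(2,3) s] .
  moreover have "\<forall>B. closed3 s B \<longrightarrow> beta_size B \<le> beta_size (beta la)"
    using maximal_core_beta[OF assms(2,4)] by blast
  ultimately obtain c where cs: "c + 1 \<le> s" and "beta la = top_set s (\<lambda>k. c - 2*k)"
    using maximal_closed_staircase[OF s] by blast
  then have "la = partition_of_beta (top_set s (\<lambda>k. c - 2*k))"
    using partition_of_beta_beta[OF assms(2)] by simp
  moreover have "2 \<le> s" using assms(1) by simp
  ultimately show ?thesis using staircase_lambdaij[OF _ cs] by simp
qed

end
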